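(* Let $G=(V,E)$ be a finite weakly connected directed multigraph (loops allowed) in which every vertex has even degree, and let $M=(M_e)_{e\in E}$ with $M_e\in M_n(\mathbb C)$. Then $$|T_G(M)|\le n\prod_{e\in E}\|M_e\|.$$ Moreover, if $f\in E$ and $M_f$ has rank $r$, then $$|T_G(M)|\le\sqrt{rn}\prod_{e\in E}\|M_e\|.$$
   Context: A directed multigraph $G=(V,E)$ consists of finite sets $V,E$ and maps $e\mapsto e_-$ (origin) and $e\mapsto e_+$ (terminus) from $E$ to $V$; $e_-=e_+$ is allowed. Weakly connected means connected after forgetting orientations. The degree of $v$ is $\deg(v)=\sum_{e\in E}(\mathbf 1(v=e_-)+\mathbf 1(v=e_+))$. For $M=(M_e)_{e\in E}$, $$T_G(M)=\sum_{\mathbf i=(i_v)_{v\in V}\in\{1,\dots,n\}^V}\ \prod_{e\in E}(M_e)_{i_{e_-}i_{e_+}}.$$ $\|\cdot\|$ is the operator norm. *)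

theory Defs
  imports "HOL-Analysis.Analysis"
begin

definition dgraph :: "'v set \<Rightarrow> 'e set \<Rightarrow> ('e \<Rightarrow> 'v) \<Rightarrow> ('e \<Rightarrow> 'v) \<Rightarrow> bool" where
  "dgraph V E src tgt \<longleftrightarrow> finite V \<and> finite E \<and> (\<forall>e\<in>E. src e \<in> V \<and> tgt e \<in> V)"

definition weakly_connected :: "'v set \<Rightarrow> 'e set \<Rightarrow> ('e \<Rightarrow> 'v) \<Rightarrow> ('e \<Rightarrow> 'v) \<Rightarrow> bool" where
  "weakly_connected V E src tgt \<longleftrightarrow>
     (\<forall>u\<in>V. \<forall>w\<in>V. (u, w) \<in> ({(src e, tgt e) | e. e \<in> E} \<union> {(tgt e, src e) | e. e \<in> E})\<^sup>*)"

definition degree :: "'e set \<Rightarrow> ('e \<Rightarrow> 'v) \<Rightarrow> ('e \<Rightarrow> 'v) \<Rightarrow> 'v \<Rightarrow> nat" where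
  "degree E src tgt v = (\<Sum>e\<in>E. (if v = src e then 1 else 0) + (if v = tgt e then 1 else 0))"

definition graph_trace ::
  "'v set \<Rightarrow> 'e set \<Rightarrow> ('e \<Rightarrow> 'v) \<Rightarrow> ('e \<Rightarrow> 'v) \<Rightarrow> ('e \<Rightarrow> complex^'n::finite^'n) \<Rightarrow> complex" where
  "graph_trace V E src tgt M =
     (\<Sum>i\<in>(V \<rightarrow>\<^sub>E (UNIV :: 'n set)). \<Prod>e\<in>E. (M e) $ (i (src e)) $ (i (tgt e)))"

definition opnorm :: "complex^'n::finite^'n \<Rightarrow> real" where
  "opnorm A = onorm (\<lambda>x. A *v x)"

end

theory Submission
  imports Defs
begin

text \<open>
  An even, weakly connected multigraph has an Euler circuit starting with any prescribed edge f.
  Along the circuit, T_G(M) becomes a sum, over index assignments to the vertices of the closed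
  walk, of a product of the matrices M_e, transposed where the walk runs against the orientation
  of e. Summing out the edges one at a time, the partial sum after k steps depends only on the
  indices at the active vertices, those already visited that will be visited again, and by
  Cauchy-Schwarz its l2 norm grows by at most a factor ||M_e|| per step. The first step
  contributes the Hilbert-Schmidt norm of M_f, and at the end only the returning start vertex is
  active, which contributes sqrt n. Thus |T_G(M)| <= ||M_f||_HS sqrt n prod_{e /= f} ||M_e||,
  and both bounds follow from ||M_f||_HS <= sqrt n ||M_f|| and ||M_f||_HS <= sqrt (rank M_f) ||M_f||.
\<close>

section \<open>Operator and Hilbert-Schmidt norms\<close>

lemma norm_vec_power2: "(norm (x :: 'a::real_normed_vector^'n))\<^sup>2 = (\<Sum>j\<in>UNIV. (norm (x $ j))\<^sup>2)"
  unfolding norm_vec_def L2_set_def by (simp add: sum_nonneg)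

lemma cmod_sum_mult_power2_le:
  fixes a b :: "'i \<Rightarrow> complex"
  shows "(cmod (\<Sum>i\<in>I. a i * b i))\<^sup>2 \<le> (\<Sum>i\<in>I. (cmod (a i))\<^sup>2) * (\<Sum>i\<in>I. (cmod (b i))\<^sup>2)"
proof -
  have "cmod (\<Sum>i\<in>I. a i * b i) \<le> (\<Sum>i\<in>I. cmod (a i) * cmod (b i))"
    using norm_sum[of "\<lambda>i. a i * b i" I] by (simp add: norm_mult)
  then have "(cmod (\<Sum>i\<in>I. a i * b i))\<^sup>2 \<le> (\<Sum>i\<in>I. cmod (a i) * cmod (b i))\<^sup>2"
    by (simp add: power_mono)
  also have "\<dots> \<le> (\<Sum>i\<in>I. (cmod (a i))\<^sup>2) * (\<Sum>i\<in>I. (cmod (b i))\<^sup>2)"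
    by (rule Cauchy_Schwarz_ineq_sum)
  finally show ?thesis .
qed

lemma opnorm_nonneg: "0 \<le> opnorm A"
  unfolding opnorm_def by (rule onorm_pos_le) simp

lemma norm_matrix_vector_le_opnorm: "norm (A *v x) \<le> opnorm A * norm x"
  unfolding opnorm_def by (rule onorm) simp

lemma opnorm_le:
  assumes "\<And>x. norm (A *v x) \<le> c * norm x"
  shows "opnorm A \<le> c"
  unfolding opnorm_def by (rule onorm_le) (fact assms)

lemma sum_matrix_mult_power2_le_opnorm:
  fixes A :: "complex^'n^'n"
  shows "(\<Sum>p\<in>UNIV. (cmod (\<Sum>q\<in>UNIV. A $ p $ q * x q))\<^sup>2) \<le> (opnorm A)\<^sup>2 * (\<Sum>q\<in>UNIV. (cmod (x q))\<^sup>2)"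
proof -
  have "(norm (A *v (\<chi> q. x q)))\<^sup>2 \<le> (opnorm A * norm (\<chi> q. x q))\<^sup>2"
    using norm_matrix_vector_le_opnorm by (rule power_mono) simp
  then show ?thesis
    by (simp add: power_mult_distrib norm_vec_power2 matrix_vector_mult_def)
qed

lemma column_power2_le_opnorm:
  fixes A :: "complex^'n^'n"
  shows "(\<Sum>p\<in>UNIV. (cmod (A $ p $ q))\<^sup>2) \<le> (opnorm A)\<^sup>2"
proof -
  define e :: "'n \<Rightarrow> complex" where "e j = (if j = q then 1 else 0)" for j
  have "(\<Sum>j\<in>UNIV. A $ p $ j * e j) = A $ p $ q" for p
    by (simp add: e_def if_distrib cong: if_cong)
  moreover have "(\<Sum>j\<in>UNIV. (cmod (e j))\<^sup>2) = 1"
    by (simp add: e_def if_distrib[of "\<lambda>z. (cmod z)\<^sup>2"] cong: if_cong)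
  ultimately show ?thesis
    using sum_matrix_mult_power2_le_opnorm[of A e] by simp
qed

lemma opnorm_transpose_le: "opnorm (transpose A) \<le> opnorm (A :: complex^'n^'n)"
proof (rule opnorm_le)
  fix y :: "complex^'n"
  define z where "z = transpose A *v y"
  (* By duality, ||z||^2 is the pairing of y with A applied to conj z; then use Cauchy-Schwarz. *)
  have "of_real ((norm z)\<^sup>2) = (\<Sum>p\<in>UNIV. cnj (z $ p) * z $ p)"
    unfolding norm_vec_power2 of_real_sum complex_norm_square by (simp add: mult.commute)
  also have "\<dots> = (\<Sum>p\<in>UNIV. \<Sum>q\<in>UNIV. cnj (z $ p) * (A $ q $ p * y $ q))"
    by (simp add: z_def matrix_vector_mult_def transpose_def sum_distrib_left)
  also have "\<dots> = (\<Sum>q\<in>UNIV. y $ q * (\<Sum>p\<in>UNIV. A $ q $ p * cnj (z $ p)))"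
    by (subst sum.swap) (simp add: sum_distrib_left mult_ac)
  finally have eq: "of_real ((norm z)\<^sup>2) = (\<Sum>q\<in>UNIV. y $ q * (\<Sum>p\<in>UNIV. A $ q $ p * cnj (z $ p)))" .
  have "((norm z)\<^sup>2)\<^sup>2 = (cmod (of_real ((norm z)\<^sup>2)))\<^sup>2"
    by (simp only: norm_of_real abs_power2)
  also have "\<dots> \<le> (norm y)\<^sup>2 * (\<Sum>q\<in>UNIV. (cmod (\<Sum>p\<in>UNIV. A $ q $ p * cnj (z $ p)))\<^sup>2)"
    unfolding eq by (unfold norm_vec_power2) (rule cmod_sum_mult_power2_le)
  also have "\<dots> \<le> (norm y)\<^sup>2 * ((opnorm A)\<^sup>2 * (norm z)\<^sup>2)"
    using sum_matrix_mult_power2_le_opnorm[of A "\<lambda>p. cnj (z $ p)"]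
    by (intro mult_left_mono) (simp_all add: norm_vec_power2[of z])
  finally have "((norm z)\<^sup>2)\<^sup>2 \<le> (opnorm A * norm y)\<^sup>2 * (norm z)\<^sup>2"
    by (simp add: power_mult_distrib mult_ac)
  then have "(norm z)\<^sup>2 \<le> (opnorm A * norm y)\<^sup>2"
    by (cases "z = 0") (simp_all add: power2_eq_square)
  then show "norm (transpose A *v y) \<le> opnorm A * norm y"
    unfolding z_def by (rule power2_le_imp_le) (simp add: opnorm_nonneg)
qed

lemma opnorm_transpose [simp]: "opnorm (transpose A) = opnorm A"
  using opnorm_transpose_le[of A] opnorm_transpose_le[of "transpose A"] by simp

lemma row_power2_le_opnorm:
  fixes A :: "complex^'n^'n"
  shows "(\<Sum>q\<in>UNIV. (cmod (A $ p $ q))\<^sup>2) \<le> (opnorm A)\<^sup>2"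
  using column_power2_le_opnorm[of "transpose A" p, unfolded opnorm_transpose]
  by (simp add: transpose_def)

lemma entry_le_opnorm: "cmod (A $ p $ q) \<le> opnorm A"
proof -
  have "(cmod (A $ p $ q))\<^sup>2 \<le> (\<Sum>p\<in>UNIV. (cmod (A $ p $ q))\<^sup>2)"
    by (rule member_le_sum) auto
  also have "\<dots> \<le> (opnorm A)\<^sup>2"
    by (rule column_power2_le_opnorm)
  finally show ?thesis
    using opnorm_nonneg by (rule power2_le_imp_le)
qed

lemma norm_matrix_power2: "(norm (A :: complex^'n^'m))\<^sup>2 = (\<Sum>p\<in>UNIV. \<Sum>q\<in>UNIV. (cmod (A $ p $ q))\<^sup>2)"
  by (simp add: norm_vec_power2)

lemma norm_transpose: "norm (transpose (A :: complex^'n^'m)) = norm A"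
proof -
  have "(norm (transpose A))\<^sup>2 = (norm A)\<^sup>2"
    unfolding norm_matrix_power2 transpose_def by (simp, rule sum.swap)
  then show ?thesis by simp
qed

lemma norm_le_sqrt_card_opnorm: "norm (A :: complex^'n^'n) \<le> sqrt CARD('n) * opnorm A"
proof -
  have "(norm A)\<^sup>2 = (\<Sum>q\<in>UNIV. \<Sum>p\<in>UNIV. (cmod (A $ p $ q))\<^sup>2)"
    unfolding norm_matrix_power2 by (rule sum.swap)
  also have "\<dots> \<le> (\<Sum>q\<in>(UNIV::'n set). (opnorm A)\<^sup>2)"
    by (rule sum_mono) (rule column_power2_le_opnorm)
  finally have "(norm A)\<^sup>2 \<le> (sqrt CARD('n) * opnorm A)\<^sup>2"
    by (simp add: power_mult_distrib)
  then show ?thesis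
    by (rule power2_le_imp_le) (simp add: opnorm_nonneg)
qed

lemma dim_complex_span_le: "dim (vec.span X) \<le> 2 * vec.dim (X :: (complex^'n) set)"
proof -
  obtain C where C: "C \<subseteq> X" "vec.independent C" "X \<subseteq> vec.span C" "card C = vec.dim X"
    using vec.basis_exists by blast
  have finC: "finite C"
    using C(2) by (rule vec.finiteI_independent)
  define W where "W = C \<union> (\<lambda>b. \<i> *s b) ` C"
  have "vec.span X \<subseteq> vec.span C"
    using C(3) vec.span_mono vec.span_span by blast
  also have "vec.span C \<subseteq> span W"
  proof
    fix x assume "x \<in> vec.span C"
    then obtain u where x: "x = (\<Sum>b\<in>C. u b *s b)"
      using vec.span_finite[OF finC] by auto
    have "u b *s b = Re (u b) *\<^sub>R b + Im (u b) *\<^sub>R (\<i> *s b)" for b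
      by (simp add: vec_eq_iff complex_eq_iff)
    moreover have "Re (u b) *\<^sub>R b + Im (u b) *\<^sub>R (\<i> *s b) \<in> span W" if "b \<in> C" for b
      using that by (intro span_add span_mul span_base) (auto simp: W_def)
    ultimately show "x \<in> span W"
      unfolding x by (intro span_sum) auto
  qed
  finally have "dim (vec.span X) \<le> card W"
    by (rule dim_le_card) (simp add: W_def finC)
  also have "card W \<le> card C + card C"
    unfolding W_def using card_Un_le card_image_le[OF finC] by (meson add_left_mono order_trans)
  finally show ?thesis
    using C(4) by simp
qed

lemma subspace_complex_span: "subspace (vec.span (X :: (complex^'n) set))"
proof -
  have "r *\<^sub>R x = of_real r *s x" for r and x :: "complex^'n"
    by (simp add: vec_eq_iff scaleR_conv_of_real[where 'a=complex])
  then show ?thesis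
    unfolding subspace_def by (simp add: vec.span_zero vec.span_add vec.span_scale)
qed

lemma norm_power2_orthonormal_expand:
  assumes "pairwise orthogonal Q" "\<And>q. q \<in> Q \<Longrightarrow> norm q = 1" "x \<in> span Q" "finite Q"
  shows "(norm x)\<^sup>2 = (\<Sum>q\<in>Q. (x \<bullet> q)\<^sup>2)"
proof -
  have "(norm x)\<^sup>2 = x \<bullet> (\<Sum>q\<in>Q. (x \<bullet> q) *\<^sub>R q)"
    using orthonormal_basis_expand[OF assms] by (simp add: power2_norm_eq_inner)
  also have "\<dots> = (\<Sum>q\<in>Q. (x \<bullet> q)\<^sup>2)"
    by (simp add: inner_sum_right power2_eq_square)
  finally show ?thesis .
qed

lemma inner_power2_add_inner_i_power2:
  fixes x q :: "complex^'n"
  shows "(x \<bullet> q)\<^sup>2 + ((\<i> *s x) \<bullet> q)\<^sup>2 = (cmod (\<Sum>j\<in>UNIV. x $ j * cnj (q $ j)))\<^sup>2"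
  unfolding inner_vec_def cmod_power2
  by (simp add: Re_sum Im_sum inner_complex_def) (simp add: sum_subtractf power2_commute)

text \<open>
  Parseval for the rows r and i r of A in a real orthonormal basis Q of the complex row space,
  whose real dimension is at most 2 rank A: the coefficients of r and i r at q are the real and
  imaginary parts of the entry of A *v conj q at that row.
\<close>

lemma norm_le_sqrt_rank_opnorm: "norm (A :: complex^'n^'n) \<le> sqrt (rank A) * opnorm A"
proof -
  define S where "S = vec.span (rows A)"
  obtain Q where Q: "pairwise orthogonal Q" "\<And>q. q \<in> Q \<Longrightarrow> norm q = 1"
      "independent Q" "card Q = dim S" "span Q = S"
    using orthonormal_basis_subspace[OF subspace_complex_span] unfolding S_def by metis
  have finQ: "finite Q"
    using Q(3) by (rule finiteI_independent)
  have row_in: "A $ p \<in> span Q" for p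
    unfolding Q(5) S_def by (rule vec.span_base) (auto simp: rows_def row_def)
  have rows_in: "A $ p \<in> span Q" "\<i> *s A $ p \<in> span Q" for p
    using row_in[of p] vec.span_scale[of "A $ p" "rows A" "\<i>"] unfolding Q(5) S_def by simp_all
  have "2 * (norm A)\<^sup>2 = (\<Sum>p\<in>UNIV. (norm (A $ p))\<^sup>2 + (norm (\<i> *s A $ p))\<^sup>2)"
    by (simp add: norm_vec_power2 norm_mult sum_distrib_left)
  also have "\<dots> = (\<Sum>p\<in>UNIV. \<Sum>q\<in>Q. (A $ p \<bullet> q)\<^sup>2 + ((\<i> *s A $ p) \<bullet> q)\<^sup>2)"
    by (simp only: norm_power2_orthonormal_expand[OF Q(1,2) rows_in(1) finQ]
        norm_power2_orthonormal_expand[OF Q(1,2) rows_in(2) finQ] sum.distrib)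
  also have "\<dots> = (\<Sum>q\<in>Q. \<Sum>p\<in>UNIV. (cmod (\<Sum>j\<in>UNIV. A $ p $ j * cnj (q $ j)))\<^sup>2)"
    by (subst sum.swap) (simp add: inner_power2_add_inner_i_power2)
  also have "\<dots> \<le> (\<Sum>q\<in>Q. (opnorm A)\<^sup>2)"
  proof (rule sum_mono)
    fix q assume "q \<in> Q"
    then show "(\<Sum>p\<in>UNIV. (cmod (\<Sum>j\<in>UNIV. A $ p $ j * cnj (q $ j)))\<^sup>2) \<le> (opnorm A)\<^sup>2"
      using sum_matrix_mult_power2_le_opnorm[of A "\<lambda>j. cnj (q $ j)"] Q(2)[of q] norm_vec_power2[of q]
      by simp
  qed
  also have "\<dots> \<le> 2 * rank A * (opnorm A)\<^sup>2"
    using dim_complex_span_le[of "rows A"] Q(4)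
    by (simp add: S_def row_rank_def_gen mult_right_mono)
  finally have "(norm A)\<^sup>2 \<le> (sqrt (rank A) * opnorm A)\<^sup>2"
    by (simp add: power_mult_distrib)
  then show ?thesis
    by (rule power2_le_imp_le) (simp add: opnorm_nonneg)
qed

section \<open>Sums over index assignments\<close>

lemma sum_PiE_insert_UNIV:
  fixes F :: "('v \<Rightarrow> 'n::finite) \<Rightarrow> 'a::comm_monoid_add"
  assumes "finite S" "v \<notin> S"
  shows "(\<Sum>\<sigma>\<in>insert v S \<rightarrow>\<^sub>E UNIV. F \<sigma>) = (\<Sum>\<sigma>\<in>S \<rightarrow>\<^sub>E UNIV. \<Sum>d\<in>UNIV. F (\<sigma>(v := d)))"
proof -
  have "(\<Sum>\<sigma>\<in>insert v S \<rightarrow>\<^sub>E UNIV. F \<sigma>) = (\<Sum>(d, \<sigma>)\<in>UNIV \<times> (S \<rightarrow>\<^sub>E UNIV). F (\<sigma>(v := d)))"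
    unfolding PiE_insert_eq
    by (subst sum.reindex) (use inj_combinator[OF assms(2)] in \<open>auto simp: case_prod_unfold\<close>)
  also have "\<dots> = (\<Sum>\<sigma>\<in>S \<rightarrow>\<^sub>E UNIV. \<Sum>d\<in>UNIV. F (\<sigma>(v := d)))"
    by (simp add: sum.cartesian_product[symmetric] sum.swap[of _ UNIV])
  finally show ?thesis .
qed

definition depends_only_on :: "'v set \<Rightarrow> (('v \<Rightarrow> 'n) \<Rightarrow> 'a) \<Rightarrow> bool" where
  "depends_only_on S g \<longleftrightarrow> (\<forall>\<sigma> \<tau>. (\<forall>v\<in>S. \<sigma> v = \<tau> v) \<longrightarrow> g \<sigma> = g \<tau>)"

lemma depends_only_onD: "depends_only_on S g \<Longrightarrow> (\<And>v. v \<in> S \<Longrightarrow> \<sigma> v = \<tau> v) \<Longrightarrow> g \<sigma> = g \<tau>"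
  unfolding depends_only_on_def by blast

lemma depends_only_on_update: "depends_only_on S g \<Longrightarrow> u \<notin> S \<Longrightarrow> g (\<sigma>(u := d)) = g \<sigma>"
  by (rule depends_only_onD[of S g]) auto

definition sqnorm_on :: "'v set \<Rightarrow> (('v \<Rightarrow> 'n::finite) \<Rightarrow> complex) \<Rightarrow> real" where
  "sqnorm_on S g = (\<Sum>\<sigma>\<in>S \<rightarrow>\<^sub>E UNIV. (cmod (g \<sigma>))\<^sup>2)"

lemma sqnorm_on_nonneg: "0 \<le> sqnorm_on S g"
  unfolding sqnorm_on_def by (rule sum_nonneg) simp

lemma sqnorm_on_insert:
  "finite S \<Longrightarrow> v \<notin> S \<Longrightarrow>
    sqnorm_on (insert v S) g = (\<Sum>\<sigma>\<in>S \<rightarrow>\<^sub>E UNIV. \<Sum>d\<in>UNIV. (cmod (g (\<sigma>(v := d))))\<^sup>2)"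
  unfolding sqnorm_on_def by (rule sum_PiE_insert_UNIV)

lemma sqnorm_on_row_contract_le:
  fixes A :: "complex^'n^'n" and g :: "('v \<Rightarrow> 'n) \<Rightarrow> complex"
  assumes "finite S" "v \<notin> S"
  shows "sqnorm_on S (\<lambda>\<sigma>. \<Sum>d\<in>UNIV. A $ \<sigma> u $ d * g (\<sigma>(v := d)))
    \<le> (opnorm A)\<^sup>2 * sqnorm_on (insert v S) g"
proof -
  have "(cmod (\<Sum>d\<in>UNIV. A $ \<sigma> u $ d * g (\<sigma>(v := d))))\<^sup>2
      \<le> (opnorm A)\<^sup>2 * (\<Sum>d\<in>UNIV. (cmod (g (\<sigma>(v := d))))\<^sup>2)" for \<sigma>
    by (rule order_trans[OF cmod_sum_mult_power2_le])
      (intro mult_right_mono row_power2_le_opnorm sum_nonneg; simp)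
  then show ?thesis
    unfolding sqnorm_on_insert[OF assms] unfolding sqnorm_on_def sum_distrib_left
    by (rule sum_mono)
qed

lemma sqnorm_on_matrix_contract_le:
  fixes A :: "complex^'n^'n" and g :: "('v \<Rightarrow> 'n) \<Rightarrow> complex"
  assumes "finite S" "u \<in> S" "v \<notin> S" "depends_only_on (insert v (S - {u})) g"
  shows "sqnorm_on S (\<lambda>\<sigma>. \<Sum>d\<in>UNIV. A $ \<sigma> u $ d * g (\<sigma>(v := d)))
    \<le> (opnorm A)\<^sup>2 * sqnorm_on (insert v (S - {u})) g"
proof -
  have S: "S = insert u (S - {u})"
    using assms(2) by auto
  have "v \<noteq> u"
    using assms(2,3) by auto
  have g_upd: "g (\<sigma>(u := p, v := d)) = g (\<sigma>(v := d))" for \<sigma> p d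
    by (rule depends_only_onD[OF assms(4)]) (use \<open>v \<noteq> u\<close> in auto)
  have "sqnorm_on S (\<lambda>\<sigma>. \<Sum>d\<in>UNIV. A $ \<sigma> u $ d * g (\<sigma>(v := d)))
      = (\<Sum>\<sigma>\<in>(S - {u}) \<rightarrow>\<^sub>E UNIV. \<Sum>p\<in>UNIV. (cmod (\<Sum>d\<in>UNIV. A $ p $ d * g (\<sigma>(v := d))))\<^sup>2)"
    using assms(1) \<open>v \<noteq> u\<close> by (subst S, subst sqnorm_on_insert) (auto simp: g_upd)
  also have "\<dots> \<le> (\<Sum>\<sigma>\<in>(S - {u}) \<rightarrow>\<^sub>E UNIV. (opnorm A)\<^sup>2 * (\<Sum>d\<in>UNIV. (cmod (g (\<sigma>(v := d))))\<^sup>2))"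
    by (intro sum_mono sum_matrix_mult_power2_le_opnorm)
  also have "\<dots> = (opnorm A)\<^sup>2 * sqnorm_on (insert v (S - {u})) g"
    using assms(1,3) by (simp add: sqnorm_on_insert sum_distrib_left)
  finally show ?thesis .
qed

lemma sqnorm_on_entry_mult_le:
  fixes A :: "complex^'n^'n" and g :: "('v \<Rightarrow> 'n) \<Rightarrow> complex"
  shows "sqnorm_on S (\<lambda>\<sigma>. A $ \<sigma> u $ \<sigma> v * g \<sigma>) \<le> (opnorm A)\<^sup>2 * sqnorm_on S g"
  unfolding sqnorm_on_def sum_distrib_left
proof (rule sum_mono)
  fix \<sigma> :: "'v \<Rightarrow> 'n"
  have "(cmod (A $ \<sigma> u $ \<sigma> v))\<^sup>2 \<le> (opnorm A)\<^sup>2"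
    by (rule power_mono[OF entry_le_opnorm norm_ge_zero])
  then show "(cmod (A $ \<sigma> u $ \<sigma> v * g \<sigma>))\<^sup>2 \<le> (opnorm A)\<^sup>2 * (cmod (g \<sigma>))\<^sup>2"
    by (simp add: norm_mult power_mult_distrib mult_right_mono)
qed

lemma sqnorm_on_column_mult_le:
  fixes A :: "complex^'n^'n" and g :: "('v \<Rightarrow> 'n) \<Rightarrow> complex"
  assumes "finite S" "u \<in> S" "u \<noteq> v" "depends_only_on (S - {u}) g"
  shows "sqnorm_on S (\<lambda>\<sigma>. A $ \<sigma> u $ \<sigma> v * g \<sigma>) \<le> (opnorm A)\<^sup>2 * sqnorm_on (S - {u}) g"
proof -
  have S: "S = insert u (S - {u})"
    using assms(2) by auto
  have g_upd: "g (\<sigma>(u := p)) = g \<sigma>" for \<sigma> p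
    by (rule depends_only_on_update[OF assms(4)]) simp
  have "sqnorm_on S (\<lambda>\<sigma>. A $ \<sigma> u $ \<sigma> v * g \<sigma>)
      = (\<Sum>\<sigma>\<in>(S - {u}) \<rightarrow>\<^sub>E UNIV. (\<Sum>p\<in>UNIV. (cmod (A $ p $ \<sigma> v))\<^sup>2) * (cmod (g \<sigma>))\<^sup>2)"
    using assms(1,3) by (subst S, subst sqnorm_on_insert)
      (auto simp: g_upd norm_mult power_mult_distrib sum_distrib_right)
  also have "\<dots> \<le> (\<Sum>\<sigma>\<in>(S - {u}) \<rightarrow>\<^sub>E UNIV. (opnorm A)\<^sup>2 * (cmod (g \<sigma>))\<^sup>2)"
    by (intro sum_mono mult_right_mono column_power2_le_opnorm) simp
  also have "\<dots> = (opnorm A)\<^sup>2 * sqnorm_on (S - {u}) g"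
    by (simp add: sqnorm_on_def sum_distrib_left)
  finally show ?thesis .
qed

section \<open>Contraction along a closed walk\<close>

lemma sum_PiE_two_vertices_le:
  fixes A :: "complex^'n::finite^'n"
  shows "(\<Sum>\<sigma>\<in>{u, v} \<rightarrow>\<^sub>E UNIV. (cmod (A $ \<sigma> u $ \<sigma> v))\<^sup>2) \<le> (norm A)\<^sup>2"
proof (cases "u = v")
  case True
  have "(\<Sum>\<sigma>\<in>{u, v} \<rightarrow>\<^sub>E UNIV. (cmod (A $ \<sigma> u $ \<sigma> v))\<^sup>2) = (\<Sum>p\<in>UNIV. (cmod (A $ p $ p))\<^sup>2)"
    unfolding True using sum_PiE_insert_UNIV[of "{}" v "\<lambda>\<sigma>. (cmod (A $ \<sigma> v $ \<sigma> v))\<^sup>2"] by simp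
  also have "\<dots> \<le> (\<Sum>p\<in>UNIV. \<Sum>q\<in>UNIV. (cmod (A $ p $ q))\<^sup>2)"
    by (intro sum_mono member_le_sum) auto
  finally show ?thesis
    by (simp add: norm_matrix_power2)
next
  case False
  have "(\<Sum>\<sigma>\<in>{u, v} \<rightarrow>\<^sub>E UNIV. (cmod (A $ \<sigma> u $ \<sigma> v))\<^sup>2) = (\<Sum>q\<in>UNIV. \<Sum>p\<in>UNIV. (cmod (A $ p $ q))\<^sup>2)"
    using False by (simp add: sum_PiE_insert_UNIV)
  also have "\<dots> = (\<Sum>p\<in>UNIV. \<Sum>q\<in>UNIV. (cmod (A $ p $ q))\<^sup>2)"
    by (rule sum.swap)
  finally show ?thesis
    by (simp add: norm_matrix_power2)
qed

text \<open>
  The walk w 0, ..., w m passes the matrices B 0, ..., B (m - 1). Once the first k of them have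
  been summed out, the rest of the sum is a function of the indices at the active vertices: those
  among w 0, ..., w k that occur again among w k, ..., w m.
\<close>

context
  fixes w :: "nat \<Rightarrow> 'v" and B :: "nat \<Rightarrow> complex^'n::finite^'n" and m :: nat
begin

abbreviation "visited k \<equiv> w ` {..k}"
abbreviation "remaining k \<equiv> w ` {k..m}"
abbreviation "active k \<equiv> visited k \<inter> remaining k"
abbreviation "walk_prod k \<sigma> \<equiv> \<Prod>j<k. B j $ \<sigma> (w j) $ \<sigma> (w (Suc j))"

lemma remaining_eq_insert:
  assumes "k < m"
  shows "remaining k = insert (w k) (remaining (Suc k))"
proof -
  have "{k..m} = insert k {Suc k..m}"
    using assms by auto
  then show ?thesis
    by simp
qed

lemma walk_step_revisit:
  assumes "k < m" "w (Suc k) \<in> visited k" "depends_only_on (active (Suc k)) g"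
  defines "h \<equiv> \<lambda>\<sigma>. B k $ \<sigma> (w k) $ \<sigma> (w (Suc k)) * g \<sigma>"
  shows "depends_only_on (active k) h
    \<and> (\<Sum>\<sigma>\<in>visited (Suc k) \<rightarrow>\<^sub>E UNIV. walk_prod (Suc k) \<sigma> * g \<sigma>)
        = (\<Sum>\<sigma>\<in>visited k \<rightarrow>\<^sub>E UNIV. walk_prod k \<sigma> * h \<sigma>)
    \<and> sqnorm_on (active k) h \<le> (opnorm (B k))\<^sup>2 * sqnorm_on (active (Suc k)) g"
proof (intro conjI)
  let ?u = "w k" and ?v = "w (Suc k)"
  have visited: "visited (Suc k) = visited k"
    using assms(2) by (auto simp: atMost_Suc)
  have remaining: "remaining k = insert ?u (remaining (Suc k))"
    using assms(1) by (rule remaining_eq_insert)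
  have uv_active: "?u \<in> active k" "?v \<in> active k"
    using assms(1,2) by (auto simp: remaining)
  show "depends_only_on (active k) h"
    unfolding depends_only_on_def h_def
  proof (intro allI impI)
    fix \<sigma> \<tau> :: "'v \<Rightarrow> 'n" assume eq: "\<forall>x\<in>active k. \<sigma> x = \<tau> x"
    have "g \<sigma> = g \<tau>"
      by (rule depends_only_onD[OF assms(3)]) (use eq in \<open>auto simp: visited remaining\<close>)
    then show "B k $ \<sigma> ?u $ \<sigma> ?v * g \<sigma> = B k $ \<tau> ?u $ \<tau> ?v * g \<tau>"
      using eq uv_active by simp
  qed
  show "(\<Sum>\<sigma>\<in>visited (Suc k) \<rightarrow>\<^sub>E UNIV. walk_prod (Suc k) \<sigma> * g \<sigma>)
      = (\<Sum>\<sigma>\<in>visited k \<rightarrow>\<^sub>E UNIV. walk_prod k \<sigma> * h \<sigma>)"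
    unfolding visited h_def by (simp add: mult_ac)
  show "sqnorm_on (active k) h \<le> (opnorm (B k))\<^sup>2 * sqnorm_on (active (Suc k)) g"
  proof (cases "?u \<in> remaining (Suc k)")
    case True
    then have "active (Suc k) = active k"
      by (auto simp: visited remaining)
    then show ?thesis
      unfolding h_def by (simp add: sqnorm_on_entry_mult_le)
  next
    case False
    then have active: "active (Suc k) = active k - {?u}"
      by (auto simp: visited remaining)
    have "?u \<noteq> ?v"
      using False assms(1) by auto
    show ?thesis
      unfolding h_def active using uv_active(1) \<open>?u \<noteq> ?v\<close> assms(3)[unfolded active]
      by (intro sqnorm_on_column_mult_le) simp_all
  qed
qed

lemma walk_prod_update: "v \<notin> visited k \<Longrightarrow> walk_prod k (\<sigma>(v := d)) = walk_prod k \<sigma>"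
  by (intro prod.cong) (auto simp: image_iff)

lemma walk_step_new:
  assumes "k < m" "w (Suc k) \<notin> visited k" "depends_only_on (active (Suc k)) g"
  defines "h \<equiv> \<lambda>\<sigma>. \<Sum>d\<in>UNIV. B k $ \<sigma> (w k) $ d * g (\<sigma>(w (Suc k) := d))"
  shows "depends_only_on (active k) h
    \<and> (\<Sum>\<sigma>\<in>visited (Suc k) \<rightarrow>\<^sub>E UNIV. walk_prod (Suc k) \<sigma> * g \<sigma>)
        = (\<Sum>\<sigma>\<in>visited k \<rightarrow>\<^sub>E UNIV. walk_prod k \<sigma> * h \<sigma>)
    \<and> sqnorm_on (active k) h \<le> (opnorm (B k))\<^sup>2 * sqnorm_on (active (Suc k)) g"
proof (intro conjI)
  let ?u = "w k" and ?v = "w (Suc k)"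
  have visited: "visited (Suc k) = insert ?v (visited k)"
    by (auto simp: atMost_Suc)
  have remaining: "remaining k = insert ?u (remaining (Suc k))"
    using assms(1) by (rule remaining_eq_insert)
  have u_active: "?u \<in> active k"
    by (auto simp: remaining)
  have "?v \<in> remaining (Suc k)"
    using assms(1) by auto
  show "depends_only_on (active k) h"
    unfolding depends_only_on_def h_def
  proof (intro allI impI)
    fix \<sigma> \<tau> :: "'v \<Rightarrow> 'n" assume eq: "\<forall>x\<in>active k. \<sigma> x = \<tau> x"
    have "g (\<sigma>(?v := d)) = g (\<tau>(?v := d))" for d
      by (rule depends_only_onD[OF assms(3)]) (use eq in \<open>auto simp: visited remaining\<close>)
    then show "(\<Sum>d\<in>UNIV. B k $ \<sigma> ?u $ d * g (\<sigma>(?v := d))) = (\<Sum>d\<in>UNIV. B k $ \<tau> ?u $ d * g (\<tau>(?v := d)))"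
      using eq u_active by simp
  qed
  have "?u \<noteq> ?v"
    using assms(2) by (metis atMost_iff image_eqI order_refl)
  then have walk_prod_Suc: "walk_prod (Suc k) (\<sigma>(?v := d)) = walk_prod k \<sigma> * B k $ \<sigma> ?u $ d" for \<sigma> d
    by (simp only: prod.lessThan_Suc walk_prod_update[OF assms(2)]) simp
  show "(\<Sum>\<sigma>\<in>visited (Suc k) \<rightarrow>\<^sub>E UNIV. walk_prod (Suc k) \<sigma> * g \<sigma>)
      = (\<Sum>\<sigma>\<in>visited k \<rightarrow>\<^sub>E UNIV. walk_prod k \<sigma> * h \<sigma>)"
    unfolding visited sum_PiE_insert_UNIV[OF finite_imageI[OF finite_atMost] assms(2)] walk_prod_Suc h_def
    by (simp add: sum_distrib_left mult_ac)
  show "sqnorm_on (active k) h \<le> (opnorm (B k))\<^sup>2 * sqnorm_on (active (Suc k)) g"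
  proof (cases "?u \<in> remaining (Suc k)")
    case True
    then have "active (Suc k) = insert ?v (active k)"
      using \<open>?v \<in> remaining (Suc k)\<close> by (auto simp: visited remaining)
    then show ?thesis
      unfolding h_def using assms(2) by (simp add: sqnorm_on_row_contract_le)
  next
    case False
    then have active: "active (Suc k) = insert ?v (active k - {?u})"
      using \<open>?v \<in> remaining (Suc k)\<close> by (auto simp: visited remaining)
    show ?thesis
      unfolding h_def active using u_active assms(2) assms(3)[unfolded active]
      by (intro sqnorm_on_matrix_contract_le) auto
  qed
qed

lemma walk_step:
  assumes "k < m" "depends_only_on (active (Suc k)) g"
  obtains h where "depends_only_on (active k) h"
    "(\<Sum>\<sigma>\<in>visited (Suc k) \<rightarrow>\<^sub>E UNIV. walk_prod (Suc k) \<sigma> * g \<sigma>)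
      = (\<Sum>\<sigma>\<in>visited k \<rightarrow>\<^sub>E UNIV. walk_prod k \<sigma> * h \<sigma>)"
    "sqnorm_on (active k) h \<le> (opnorm (B k))\<^sup>2 * sqnorm_on (active (Suc k)) g"
  using walk_step_revisit[OF assms(1) _ assms(2)] walk_step_new[OF assms(1) _ assms(2)] that
  by (cases "w (Suc k) \<in> visited k") blast+

lemma walk_sum_bound_base:
  assumes "1 \<le> m" "w m = w 0"
  shows "cmod (\<Sum>\<sigma>\<in>visited 1 \<rightarrow>\<^sub>E UNIV. walk_prod 1 \<sigma> * g \<sigma>)
    \<le> norm (B 0) * sqrt (sqnorm_on (active 1) g)"
proof -
  have visited: "visited 1 = {w 0, w 1}"
    by (auto simp: atMost_Suc)
  have "w 0 \<in> remaining 1" "w 1 \<in> remaining 1"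
    using assms by (auto intro!: image_eqI[of "w 0" w m])
  then have active: "active 1 = {w 0, w 1}"
    unfolding visited by blast
  have "(cmod (\<Sum>\<sigma>\<in>visited 1 \<rightarrow>\<^sub>E UNIV. walk_prod 1 \<sigma> * g \<sigma>))\<^sup>2
      \<le> (\<Sum>\<sigma>\<in>visited 1 \<rightarrow>\<^sub>E UNIV. (cmod (walk_prod 1 \<sigma>))\<^sup>2) * sqnorm_on (active 1) g"
    unfolding sqnorm_on_def active unfolding visited by (rule cmod_sum_mult_power2_le)
  also have "\<dots> \<le> (norm (B 0))\<^sup>2 * sqnorm_on (active 1) g"
    unfolding visited using sum_PiE_two_vertices_le[of "B 0" "w 0" "w 1"]
    by (intro mult_right_mono sqnorm_on_nonneg) simp_all
  also have "\<dots> = (norm (B 0) * sqrt (sqnorm_on (active 1) g))\<^sup>2"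
    by (simp add: power_mult_distrib sqnorm_on_nonneg)
  finally show ?thesis
    by (rule power2_le_imp_le) (simp add: sqnorm_on_nonneg)
qed

lemma walk_sum_bound:
  assumes "w m = w 0" "1 \<le> k" "k \<le> m" "depends_only_on (active k) g"
  shows "cmod (\<Sum>\<sigma>\<in>visited k \<rightarrow>\<^sub>E UNIV. walk_prod k \<sigma> * g \<sigma>)
    \<le> norm (B 0) * (\<Prod>i\<in>{1..<k}. opnorm (B i)) * sqrt (sqnorm_on (active k) g)"
  using assms(2-4)
proof (induction k arbitrary: g rule: nat_induct_at_least)
  case base
  then show ?case
    using walk_sum_bound_base[OF _ assms(1)] by simp
next
  case (Suc k)
  obtain h where h: "depends_only_on (active k) h"
    "(\<Sum>\<sigma>\<in>visited (Suc k) \<rightarrow>\<^sub>E UNIV. walk_prod (Suc k) \<sigma> * g \<sigma>)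
      = (\<Sum>\<sigma>\<in>visited k \<rightarrow>\<^sub>E UNIV. walk_prod k \<sigma> * h \<sigma>)"
    "sqnorm_on (active k) h \<le> (opnorm (B k))\<^sup>2 * sqnorm_on (active (Suc k)) g"
    using walk_step[of k g] Suc.prems by auto
  have coeff_nonneg: "0 \<le> norm (B 0) * (\<Prod>i\<in>{1..<k}. opnorm (B i))"
    by (simp add: prod_nonneg opnorm_nonneg)
  have "cmod (\<Sum>\<sigma>\<in>visited (Suc k) \<rightarrow>\<^sub>E UNIV. walk_prod (Suc k) \<sigma> * g \<sigma>)
      \<le> norm (B 0) * (\<Prod>i\<in>{1..<k}. opnorm (B i)) * sqrt (sqnorm_on (active k) h)"
    unfolding h(2) using Suc.IH[OF _ h(1)] Suc.prems by simp
  also have "\<dots> \<le> norm (B 0) * (\<Prod>i\<in>{1..<k}. opnorm (B i)) * sqrt ((opnorm (B k))\<^sup>2 * sqnorm_on (active (Suc k)) g)"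
    using h(3) coeff_nonneg by (intro mult_left_mono) simp_all
  also have "\<dots> = norm (B 0) * (\<Prod>i\<in>{1..<Suc k}. opnorm (B i)) * sqrt (sqnorm_on (active (Suc k)) g)"
    using Suc.hyps by (simp add: real_sqrt_mult opnorm_nonneg prod.atLeastLessThan_Suc mult_ac)
  finally show ?case .
qed

lemma closed_walk_sum_bound:
  assumes "1 \<le> m" "w m = w 0"
  shows "cmod (\<Sum>\<sigma>\<in>visited m \<rightarrow>\<^sub>E UNIV. walk_prod m \<sigma>)
    \<le> norm (B 0) * (\<Prod>i\<in>{1..<m}. opnorm (B i)) * sqrt CARD('n)"
proof -
  have "active m = {w 0}"
    using assms(2) by auto
  moreover have "sqnorm_on {w 0} (\<lambda>_::'v \<Rightarrow> 'n. 1) = CARD('n)"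
    by (simp add: sqnorm_on_def card_PiE)
  moreover have "depends_only_on (active m) (\<lambda>_. 1)"
    by (simp add: depends_only_on_def)
  ultimately show ?thesis
    using walk_sum_bound[OF assms(2,1) order_refl, of "\<lambda>_. 1"] by simp
qed

end

section \<open>Euler circuits\<close>

definition joins :: "('e \<Rightarrow> 'v) \<Rightarrow> ('e \<Rightarrow> 'v) \<Rightarrow> 'e \<Rightarrow> 'v \<Rightarrow> 'v \<Rightarrow> bool" where
  "joins src tgt e x y \<longleftrightarrow> (src e = x \<and> tgt e = y) \<or> (src e = y \<and> tgt e = x)"

definition incidence :: "('e \<Rightarrow> 'v) \<Rightarrow> ('e \<Rightarrow> 'v) \<Rightarrow> 'e \<Rightarrow> 'v \<Rightarrow> nat" where
  "incidence src tgt e v = (if v = src e then 1 else 0) + (if v = tgt e then 1 else 0)"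

lemma degree_eq_sum_incidence: "degree E src tgt v = (\<Sum>e\<in>E. incidence src tgt e v)"
  unfolding degree_def incidence_def ..

lemma incidence_joins:
  "joins src tgt e x y \<Longrightarrow> incidence src tgt e v = (if v = x then 1 else 0) + (if v = y then 1 else 0)"
  unfolding joins_def incidence_def by auto

definition trail :: "'e set \<Rightarrow> ('e \<Rightarrow> 'v) \<Rightarrow> ('e \<Rightarrow> 'v) \<Rightarrow> (nat \<Rightarrow> 'v) \<Rightarrow> (nat \<Rightarrow> 'e) \<Rightarrow> nat \<Rightarrow> bool" where
  "trail E src tgt w es m \<longleftrightarrow> inj_on es {..<m} \<and> es ` {..<m} \<subseteq> E \<and>
     (\<forall>k<m. joins src tgt (es k) (w k) (w (Suc k)))"

lemma trail_joins: "trail E src tgt w es m \<Longrightarrow> k < m \<Longrightarrow> joins src tgt (es k) (w k) (w (Suc k))"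
  unfolding trail_def by blast

lemma trail_length_le_card:
  assumes "trail E src tgt w es m" "finite E"
  shows "m \<le> card E"
proof -
  have "card (es ` {..<m}) = m"
    using assms(1) unfolding trail_def by (simp add: card_image)
  moreover have "card (es ` {..<m}) \<le> card E"
    using assms unfolding trail_def by (intro card_mono) auto
  ultimately show ?thesis
    by simp
qed

lemma trail_snoc:
  assumes "trail E src tgt w es m" "e \<in> E" "e \<notin> es ` {..<m}" "joins src tgt e (w m) x"
  shows "trail E src tgt (w(Suc m := x)) (es(m := e)) (Suc m)"
proof -
  have "inj_on es {..<m}" "es ` {..<m} \<subseteq> E" "\<forall>k<m. joins src tgt (es k) (w k) (w (Suc k))"
    using assms(1) by (simp_all add: trail_def)
  moreover have "inj_on (es(m := e)) {..<m} = inj_on es {..<m}"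
    by (rule inj_on_cong) simp
  moreover have "{..<m} \<inter> {k. k \<noteq> m} = {..<m}"
    by auto
  ultimately show ?thesis
    using assms(2-4) unfolding trail_def by (simp add: lessThan_Suc inj_on_insert fun_upd_image less_Suc_eq)
qed

lemma trail_vertex_in:
  assumes "trail E src tgt w es m" "\<forall>e\<in>E. src e \<in> V \<and> tgt e \<in> V" "1 \<le> m" "k \<le> m"
  shows "w k \<in> V"
proof -
  obtain j where "j < m" "k = j \<or> k = Suc j"
  proof (cases "k < m")
    case False
    then have "m - 1 < m" "k = Suc (m - 1)"
      using assms(3,4) by auto
    then show ?thesis
      using that by blast
  qed (use that in blast)
  moreover from \<open>j < m\<close> have "es j \<in> E" "joins src tgt (es j) (w j) (w (Suc j))"
    using assms(1) by (auto simp: trail_def)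
  ultimately show ?thesis
    using assms(2) unfolding joins_def by auto
qed

lemma trail_incidence_parity:
  assumes "trail E src tgt w es m" "k \<le> m"
  shows "even ((\<Sum>j<k. incidence src tgt (es j) v) + (if v = w 0 then 1 else 0) + (if v = w k then 1 else 0))"
  using assms(2)
proof (induction k)
  case (Suc k)
  have "incidence src tgt (es k) v = (if v = w k then 1 else 0) + (if v = w (Suc k) then 1 else 0)"
    using Suc.prems by (intro incidence_joins trail_joins[OF assms(1)]) simp
  then have "(\<Sum>j<Suc k. incidence src tgt (es j) v) + (if v = w 0 then 1 else 0) + (if v = w (Suc k) then 1 else 0)
      = ((\<Sum>j<k. incidence src tgt (es j) v) + (if v = w 0 then 1 else 0) + (if v = w k then 1 else 0))
        + 2 * (if v = w (Suc k) then 1 else 0)"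
    by simp
  then show ?case
    using Suc by (simp only:) simp
qed simp

lemma degree_trail_split:
  assumes "trail E src tgt w es m" "finite E"
  shows "degree E src tgt v
    = (\<Sum>j<m. incidence src tgt (es j) v) + (\<Sum>e\<in>E - es ` {..<m}. incidence src tgt e v)"
proof -
  have "es ` {..<m} \<subseteq> E" "inj_on es {..<m}"
    using assms(1) by (auto simp: trail_def)
  then show ?thesis
    unfolding degree_eq_sum_incidence using assms(2)
    by (simp add: sum.subset_diff[of "es ` {..<m}" E] sum.reindex add.commute)
qed

lemma inj_on_mod_shift: "inj_on (\<lambda>k. (k + j) mod m) {..<m::nat}"
proof -
  have "x = y" if "x \<le> y" "y < m" "(x + j) mod m = (y + j) mod m" for x y
  proof -
    have "m dvd y - x"
      using that(1,3) mod_eq_dvd_iff_nat[of "x + j" "y + j" m] by simp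
    then show ?thesis
      using that(1,2) dvd_imp_le[of m "y - x"] by linarith
  qed
  then show ?thesis
    by (intro inj_onI) (metis lessThan_iff linear)
qed

lemma trail_rotate:
  assumes "trail E src tgt w es m" "w m = w 0" "j < m"
  shows "trail E src tgt (\<lambda>k. w ((k + j) mod m)) (\<lambda>k. es ((k + j) mod m)) m"
    and "(\<lambda>k. es ((k + j) mod m)) ` {..<m} = es ` {..<m}"
proof -
  have shift: "(\<lambda>k. (k + j) mod m) ` {..<m} = {..<m}"
    using assms(3) by (intro endo_inj_surj inj_on_mod_shift) auto
  then show image: "(\<lambda>k. es ((k + j) mod m)) ` {..<m} = es ` {..<m}"
    by (metis image_image)
  have next_vertex: "w (Suc ((k + j) mod m)) = w ((Suc k + j) mod m)" for k
    using assms(2) by (simp add: mod_Suc)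
  have "inj_on (es \<circ> (\<lambda>k. (k + j) mod m)) {..<m}"
    using assms(1) shift inj_on_mod_shift by (intro comp_inj_on) (auto simp: trail_def)
  then show "trail E src tgt (\<lambda>k. w ((k + j) mod m)) (\<lambda>k. es ((k + j) mod m)) m"
    using assms(1,3) image unfolding trail_def next_vertex[symmetric] by (auto simp: o_def)
qed

lemma exists_longest_trail:
  assumes "finite E" "f \<in> E"
  obtains w es m where "trail E src tgt w es m" "1 \<le> m"
    "\<And>w' es' m'. trail E src tgt w' es' m' \<Longrightarrow> m' \<le> m"
proof -
  define L where "L = {m. \<exists>w es. trail E src tgt w es m}"
  have "trail E src tgt (\<lambda>k. if k = 0 then src f else tgt f) (\<lambda>_. f) 1"
    using assms(2) by (simp add: trail_def joins_def lessThan_Suc)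
  then have "1 \<in> L"
    unfolding L_def by blast
  moreover have "finite L"
    using trail_length_le_card[OF _ assms(1)] by (intro finite_subset[of L "{..card E}"]) (auto simp: L_def)
  ultimately have "Max L \<in> L" "1 \<le> Max L" "\<And>m'. m' \<in> L \<Longrightarrow> m' \<le> Max L"
    by (auto intro: Max_in Max_ge)
  then show ?thesis
    using that unfolding L_def by blast
qed

lemma longest_trail_closed:
  assumes "trail E src tgt w es m" "1 \<le> m" "\<And>w' es' m'. trail E src tgt w' es' m' \<Longrightarrow> m' \<le> m"
    and "finite E" "\<forall>e\<in>E. src e \<in> V \<and> tgt e \<in> V" "\<forall>v\<in>V. even (degree E src tgt v)"
  shows "w m = w 0"
proof (rule ccontr)
  (* An open trail uses an odd number of edge ends at its last vertex, so an unused edge ends there. *)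
  assume open_trail: "w m \<noteq> w 0"
  have "w m \<in> V"
    using assms(1,5,2) by (rule trail_vertex_in) simp
  then have "even ((\<Sum>j<m. incidence src tgt (es j) (w m)) + (\<Sum>e\<in>E - es ` {..<m}. incidence src tgt e (w m)))"
    using assms(6) degree_trail_split[OF assms(1,4)] by metis
  moreover have "odd (\<Sum>j<m. incidence src tgt (es j) (w m))"
    using trail_incidence_parity[OF assms(1) order_refl, of "w m"] open_trail by simp
  ultimately have "(\<Sum>e\<in>E - es ` {..<m}. incidence src tgt e (w m)) \<noteq> 0"
    by (auto intro!: odd_pos)
  then obtain e where e: "e \<in> E" "e \<notin> es ` {..<m}" "incidence src tgt e (w m) \<noteq> 0"
    by (rule sum.not_neutral_contains_not_neutral) auto
  then have "joins src tgt e (w m) (if src e = w m then tgt e else src e)"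
    by (auto simp: joins_def incidence_def split: if_splits)
  then have "trail E src tgt (w(Suc m := if src e = w m then tgt e else src e)) (es(m := e)) (Suc m)"
    by (rule trail_snoc[OF assms(1) e(1,2)])
  from assms(3)[OF this] show False
    by simp
qed

lemma unused_edge_at_trail_vertex:
  assumes "trail E src tgt w es m" "es ` {..<m} \<noteq> E" "w 0 \<in> V"
    and "\<forall>e\<in>E. src e \<in> V \<and> tgt e \<in> V" "weakly_connected V E src tgt"
  obtains j e where "j \<le> m" "e \<in> E" "e \<notin> es ` {..<m}" "src e = w j \<or> tgt e = w j"
proof (rule ccontr)
  (* Otherwise every vertex reachable from w 0 lies on the trail, including the ends of unused edges. *)
  assume no_edge: "\<not> thesis"
  note found = that
  let ?R = "{(src e, tgt e) | e. e \<in> E} \<union> {(tgt e, src e) | e. e \<in> E}"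
  have "y \<in> w ` {..m}" if "(w 0, y) \<in> ?R\<^sup>*" for y
    using that
  proof (induction rule: rtrancl_induct)
    case (step y z)
    then obtain e where e: "e \<in> E" "joins src tgt e y z"
      by (auto simp: joins_def)
    obtain j where j: "j \<le> m" "y = w j"
      using step.IH by auto
    show ?case
    proof (cases "e \<in> es ` {..<m}")
      case True
      then obtain k where "k < m" "e = es k"
        by auto
      then show ?thesis
        using trail_joins[OF assms(1) \<open>k < m\<close>] e(2) by (auto simp: joins_def)
    next
      case False
      have "src e = w j \<or> tgt e = w j"
        using e(2) j(2) by (auto simp: joins_def)
      then show ?thesis
        using found[OF j(1) e(1) False] no_edge by blast
    qed
  qed simp
  moreover obtain e where "e \<in> E" "e \<notin> es ` {..<m}"
    using assms(1,2) by (auto simp: trail_def)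
  moreover have "(w 0, src e) \<in> ?R\<^sup>*"
    using assms(3-5) \<open>e \<in> E\<close> unfolding weakly_connected_def by blast
  ultimately show False
    using found no_edge by blast
qed

lemma longest_closed_trail_covers:
  assumes "trail E src tgt w es m" "1 \<le> m" "w m = w 0"
    and "\<And>w' es' m'. trail E src tgt w' es' m' \<Longrightarrow> m' \<le> m"
    and "\<forall>e\<in>E. src e \<in> V \<and> tgt e \<in> V" "weakly_connected V E src tgt"
  shows "es ` {..<m} = E"
proof (rule ccontr)
  assume "es ` {..<m} \<noteq> E"
  moreover have "w 0 \<in> V"
    using assms(1,5,2) by (rule trail_vertex_in) simp
  ultimately obtain j e where j: "j \<le> m" "e \<in> E" "e \<notin> es ` {..<m}" "src e = w j \<or> tgt e = w j"
    using unused_edge_at_trail_vertex[OF assms(1) _ _ assms(5,6)] by blast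
  (* Rotate the closed trail so that it ends at w j, then append e. *)
  define i where "i = j mod m"
  have "i < m" "w i = w j"
    using j(1) assms(2,3) by (auto simp: i_def le_less)
  then have rotated: "trail E src tgt (\<lambda>k. w ((k + i) mod m)) (\<lambda>k. es ((k + i) mod m)) m"
      "(\<lambda>k. es ((k + i) mod m)) ` {..<m} = es ` {..<m}"
    using trail_rotate[OF assms(1,3)] by auto
  have "joins src tgt e (w ((m + i) mod m)) (if src e = w j then tgt e else src e)"
    using j(4) \<open>i < m\<close> \<open>w i = w j\<close> by (auto simp: joins_def)
  then have "trail E src tgt ((\<lambda>k. w ((k + i) mod m))(Suc m := if src e = w j then tgt e else src e))
      ((\<lambda>k. es ((k + i) mod m))(m := e)) (Suc m)"
    using j(2,3) rotated by (intro trail_snoc) auto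
  from assms(4)[OF this] show False
    by simp
qed

lemma euler_circuit:
  assumes "dgraph V E src tgt" "weakly_connected V E src tgt" "\<forall>v\<in>V. even (degree E src tgt v)" "f \<in> E"
  obtains w es m where "trail E src tgt w es m" "es ` {..<m} = E" "w m = w 0" "es 0 = f" "1 \<le> m"
proof -
  have fin: "finite E" and ends: "\<forall>e\<in>E. src e \<in> V \<and> tgt e \<in> V"
    using assms(1) by (auto simp: dgraph_def)
  obtain w es m where longest: "trail E src tgt w es m" "1 \<le> m"
    "\<And>w' es' m'. trail E src tgt w' es' m' \<Longrightarrow> m' \<le> m"
    using exists_longest_trail[OF fin assms(4)] by blast
  have closed: "w m = w 0"
    using longest fin ends assms(3) by (rule longest_trail_closed)
  have cover: "es ` {..<m} = E"
    using longest(1,2) closed longest(3) ends assms(2) by (rule longest_closed_trail_covers)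
  then obtain j where "j < m" "es j = f"
    using assms(4) by auto
  with trail_rotate[OF longest(1) closed \<open>j < m\<close>] show ?thesis
    using that cover longest(2) closed by auto
qed

definition traversal_matrix ::
  "('e \<Rightarrow> 'v) \<Rightarrow> ('e \<Rightarrow> 'v) \<Rightarrow> ('e \<Rightarrow> complex^'n^'n) \<Rightarrow> (nat \<Rightarrow> 'v) \<Rightarrow> (nat \<Rightarrow> 'e) \<Rightarrow> nat \<Rightarrow> complex^'n^'n"
  where "traversal_matrix src tgt M w es j =
    (if src (es j) = w j \<and> tgt (es j) = w (Suc j) then M (es j) else transpose (M (es j)))"

lemma traversal_matrix_entry:
  "joins src tgt (es j) (w j) (w (Suc j)) \<Longrightarrow>
    traversal_matrix src tgt M w es j $ \<sigma> (w j) $ \<sigma> (w (Suc j)) = M (es j) $ \<sigma> (src (es j)) $ \<sigma> (tgt (es j))"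
  unfolding traversal_matrix_def joins_def by (auto simp: transpose_def)

lemma opnorm_traversal_matrix: "opnorm (traversal_matrix src tgt M w es j) = opnorm (M (es j))"
  by (simp add: traversal_matrix_def)

lemma norm_traversal_matrix: "norm (traversal_matrix src tgt M w es j) = norm (M (es j))"
  by (simp add: traversal_matrix_def norm_transpose)

lemma covering_trail_vertices:
  assumes "trail E src tgt w es m" "es ` {..<m} = E" "1 \<le> m"
    and "\<forall>e\<in>E. src e \<in> V \<and> tgt e \<in> V" "weakly_connected V E src tgt"
  shows "w ` {..m} = V"
proof
  show "w ` {..m} \<subseteq> V"
    using trail_vertex_in[OF assms(1,4,3)] by auto
  show "V \<subseteq> w ` {..m}"
  proof
    fix v assume "v \<in> V"
    have "es 0 \<in> E"
      using assms(2,3) by auto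
    then have "(src (es 0), v) \<in> ({(src e, tgt e) | e. e \<in> E} \<union> {(tgt e, src e) | e. e \<in> E})\<^sup>*"
      using assms(4,5) \<open>v \<in> V\<close> unfolding weakly_connected_def by blast
    then obtain e where "e \<in> E" "src e = v \<or> tgt e = v"
      using \<open>es 0 \<in> E\<close> by (cases rule: rtranclE) auto
    then obtain k where "k < m" "joins src tgt (es k) (w k) (w (Suc k))" "src (es k) = v \<or> tgt (es k) = v"
      using assms(2) trail_joins[OF assms(1)] by force
    then show "v \<in> w ` {..m}"
      unfolding joins_def by (auto intro: image_eqI[of v w k] image_eqI[of v w "Suc k"])
  qed
qed

lemma graph_trace_eq_walk_sum:
  assumes "trail E src tgt w es m" "es ` {..<m} = E" "w ` {..m} = V"
  shows "graph_trace V E src tgt M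
    = (\<Sum>\<sigma>\<in>w ` {..m} \<rightarrow>\<^sub>E UNIV. \<Prod>j<m. traversal_matrix src tgt M w es j $ \<sigma> (w j) $ \<sigma> (w (Suc j)))"
proof -
  have "(\<Prod>e\<in>E. M e $ \<sigma> (src e) $ \<sigma> (tgt e))
      = (\<Prod>j<m. traversal_matrix src tgt M w es j $ \<sigma> (w j) $ \<sigma> (w (Suc j)))" for \<sigma>
  proof -
    have "(\<Prod>e\<in>E. M e $ \<sigma> (src e) $ \<sigma> (tgt e)) = (\<Prod>j<m. M (es j) $ \<sigma> (src (es j)) $ \<sigma> (tgt (es j)))"
      unfolding assms(2)[symmetric] using assms(1) by (simp add: trail_def prod.reindex)
    also have "\<dots> = (\<Prod>j<m. traversal_matrix src tgt M w es j $ \<sigma> (w j) $ \<sigma> (w (Suc j)))"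
      using trail_joins[OF assms(1)] by (simp add: traversal_matrix_entry)
    finally show ?thesis .
  qed
  then show ?thesis
    unfolding graph_trace_def assms(3) by simp
qed

lemma norm_graph_trace_le:
  fixes M :: "'e \<Rightarrow> complex^'n::finite^'n"
  assumes "dgraph V E src tgt" "weakly_connected V E src tgt" "\<forall>v\<in>V. even (degree E src tgt v)" "f \<in> E"
  shows "norm (graph_trace V E src tgt M) \<le> norm (M f) * (\<Prod>e\<in>E - {f}. opnorm (M e)) * sqrt CARD('n)"
proof -
  obtain w es m where circuit: "trail E src tgt w es m" "es ` {..<m} = E" "w m = w 0" "es 0 = f" "1 \<le> m"
    using euler_circuit[OF assms] .
  define B where "B = traversal_matrix src tgt M w es"
  have "w ` {..m} = V"
    using circuit(1,2,5) assms(1,2) by (intro covering_trail_vertices) (auto simp: dgraph_def)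
  then have "graph_trace V E src tgt M = (\<Sum>\<sigma>\<in>w ` {..m} \<rightarrow>\<^sub>E UNIV. \<Prod>j<m. B j $ \<sigma> (w j) $ \<sigma> (w (Suc j)))"
    unfolding B_def by (rule graph_trace_eq_walk_sum[OF circuit(1,2)])
  moreover have "(\<Prod>i\<in>{1..<m}. opnorm (B i)) = (\<Prod>e\<in>E - {f}. opnorm (M e))"
  proof -
    have inj: "inj_on es {..<m}"
      using circuit(1) by (simp add: trail_def)
    moreover have "{1..<m} = {..<m} - {0}"
      by auto
    ultimately have image: "es ` {1..<m} = E - {f}"
      using circuit(2,4,5) by (simp add: inj_on_image_set_diff)
    have "inj_on es {1..<m}"
      using inj by (rule inj_on_subset) auto
    then show ?thesis
      unfolding image[symmetric] by (simp add: B_def opnorm_traversal_matrix prod.reindex)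
  qed
  moreover have "norm (B 0) = norm (M f)"
    by (simp add: B_def norm_traversal_matrix circuit(4))
  ultimately show ?thesis
    using closed_walk_sum_bound[of m w B] circuit(3,5) by simp
qed

lemma norm_graph_trace_edgeless:
  fixes M :: "'e \<Rightarrow> complex^'n::finite^'n"
  assumes "finite V" "weakly_connected V {} src tgt"
  shows "norm (graph_trace V {} src tgt M) \<le> CARD('n)"
proof -
  have "card V \<le> 1"
    using assms unfolding weakly_connected_def by (auto simp: card_le_Suc0_iff_eq)
  then have "CARD('n) ^ card V \<le> CARD('n)"
    by (cases "card V") (auto simp: Suc_le_eq)
  moreover have "graph_trace V {} src tgt M = of_nat (CARD('n) ^ card V)"
    using assms(1) by (simp add: graph_trace_def card_PiE)
  ultimately show ?thesis
    by (simp only: norm_of_nat of_nat_le_iff)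
qed

lemma norm_graph_trace_le_prod_opnorm:
  fixes M :: "'e \<Rightarrow> complex^'n::finite^'n"
  assumes "dgraph V E src tgt" "weakly_connected V E src tgt" "\<forall>v\<in>V. even (degree E src tgt v)"
    and "f \<in> E" "norm (M f) \<le> c * opnorm (M f)"
  shows "norm (graph_trace V E src tgt M) \<le> c * sqrt CARD('n) * (\<Prod>e\<in>E. opnorm (M e))"
proof -
  have "norm (graph_trace V E src tgt M) \<le> norm (M f) * (\<Prod>e\<in>E - {f}. opnorm (M e)) * sqrt CARD('n)"
    using assms(1-4) by (rule norm_graph_trace_le)
  also have "\<dots> \<le> c * opnorm (M f) * (\<Prod>e\<in>E - {f}. opnorm (M e)) * sqrt CARD('n)"
    using assms(5) by (intro mult_right_mono) (simp_all add: prod_nonneg opnorm_nonneg)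
  also have "\<dots> = c * sqrt CARD('n) * (\<Prod>e\<in>E. opnorm (M e))"
    using assms(1,4) by (simp add: dgraph_def prod.remove mult_ac)
  finally show ?thesis .
qed

theorem theorem7p9:
  fixes V :: "'v set" and E :: "'e set" and src tgt :: "'e \<Rightarrow> 'v"
    and M :: "'e \<Rightarrow> complex^'n::finite^'n"
  assumes "dgraph V E src tgt"
    and "weakly_connected V E src tgt"
    and "\<forall>v\<in>V. even (degree E src tgt v)"
  shows "norm (graph_trace V E src tgt M) \<le> real CARD('n) * (\<Prod>e\<in>E. opnorm (M e))
       \<and> (\<forall>f\<in>E. norm (graph_trace V E src tgt M)
           \<le> sqrt (real (rank (M f)) * real CARD('n)) * (\<Prod>e\<in>E. opnorm (M e)))"
proof -
  have "norm (graph_trace V E src tgt M) \<le> real CARD('n) * (\<Prod>e\<in>E. opnorm (M e))"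
  proof (cases "E = {}")
    case True
    then show ?thesis
      using norm_graph_trace_edgeless assms(1,2) by (simp add: dgraph_def)
  next
    case False
    then obtain f where "f \<in> E"
      by blast
    then show ?thesis
      using norm_graph_trace_le_prod_opnorm[OF assms _ norm_le_sqrt_card_opnorm] by simp
  qed
  moreover have "norm (graph_trace V E src tgt M)
      \<le> sqrt (real (rank (M f)) * real CARD('n)) * (\<Prod>e\<in>E. opnorm (M e))" if "f \<in> E" for f
    using norm_graph_trace_le_prod_opnorm[OF assms that norm_le_sqrt_rank_opnorm]
    by (simp add: real_sqrt_mult)
  ultimately show ?thesis
    by blast
qed

end
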